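(* Let $A\in\mathbb{C}^{p\times p}$ and $C\in\mathbb{C}^{q\times q}$ be Hermitian positive semidefinite, let $B\in\mathbb{C}^{p\times q}$, and let $H=\begin{bmatrix} A & B\\ B^* & -C\end{bmatrix}$. Then $H$ is nonsingular if and only if the matrices $A+\sqrt{BB^*}$ and $C+\sqrt{B^*B}$ are both positive definite.
   Context: $\sqrt{X}$ denotes the positive semidefinite square root of a positive semidefinite matrix $X$. *)

theory Defs
  imports "Jordan_Normal_Form.Schur_Decomposition"
begin

definition hermitian_mat :: "complex mat \<Rightarrow> bool" where
  "hermitian_mat A \<longleftrightarrow> square_mat A \<and> mat_adjoint A = A"

text \<open>Hermitian positive semidefinite: x* A x \<ge> 0 for all x (the quadratic form
  of a Hermitian matrix is real, so we compare its real part).\<close>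
definition psd_mat :: "complex mat \<Rightarrow> bool" where
  "psd_mat A \<longleftrightarrow> hermitian_mat A \<and>
     (\<forall>v \<in> carrier_vec (dim_row A). 0 \<le> Re ((A *\<^sub>v v) \<bullet>c v))"

definition pd_mat :: "complex mat \<Rightarrow> bool" where
  "pd_mat A \<longleftrightarrow> hermitian_mat A \<and>
     (\<forall>v \<in> carrier_vec (dim_row A). v \<noteq> 0\<^sub>v (dim_row A) \<longrightarrow> 0 < Re ((A *\<^sub>v v) \<bullet>c v))"

definition sqrt_mat :: "complex mat \<Rightarrow> complex mat" where
  "sqrt_mat X = (THE S. psd_mat S \<and> S * S = X)"

end

(*
  Write a vector in the kernel of H as (x, y), so that A x + B y = 0 and B^H x = C y.  Pairing the
  first equation with x and using the second, x^H A x + conj (y^H C y) = 0; both forms are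
  nonnegative, so A x = 0 and C y = 0, and then B y = 0 and B^H x = 0.  Hence H is nonsingular iff
  ker A and ker B^H meet trivially and ker C and ker B meet trivially.  For positive semidefinite P
  and Q, P + Q is positive definite iff ker P and ker Q meet trivially, and
  ker sqrt (B B^H) = ker (B B^H) = ker B^H, ker sqrt (B^H B) = ker B.  The square root is meaningful
  because of the spectral theorem, proved by splitting off an eigenvector with a unitary matrix.
*)

theory Submission
  imports Defs "Jordan_Normal_Form.Spectral_Radius" "Jordan_Normal_Form.Matrix_Kernel"
begin

section \<open>Adjoints and the complex inner product\<close>

lemma dim_mat_adjoint [simp]:
  "dim_row (mat_adjoint A) = dim_col A" "dim_col (mat_adjoint A) = dim_row A"
  unfolding mat_adjoint_def by (auto simp: mat_of_rows_def)

lemma mat_adjoint_carrier_mat [simp, intro]: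
  "A \<in> carrier_mat n m \<Longrightarrow> mat_adjoint A \<in> carrier_mat m n"
  unfolding carrier_mat_def by simp

lemma index_mat_adjoint [simp]:
  "i < dim_col A \<Longrightarrow> j < dim_row A \<Longrightarrow> mat_adjoint A $$ (i, j) = cnj (A $$ (j, i))"
  unfolding mat_adjoint_def by (auto simp: mat_of_rows_def)

lemma mat_adjoint_adjoint [simp]: "mat_adjoint (mat_adjoint (A :: complex mat)) = A"
  by (rule eq_matI) auto

lemma mat_adjoint_one [simp]: "mat_adjoint (1\<^sub>m n :: complex mat) = 1\<^sub>m n"
  by (rule eq_matI) auto

lemma mat_adjoint_zero [simp]: "mat_adjoint (0\<^sub>m n m :: complex mat) = 0\<^sub>m m n"
  by (rule eq_matI) auto

lemma mat_adjoint_mult: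
  assumes "(A :: complex mat) \<in> carrier_mat n k" "B \<in> carrier_mat k m"
  shows "mat_adjoint (A * B) = mat_adjoint B * mat_adjoint A"
  using assms by (intro eq_matI) (auto simp: scalar_prod_def mult.commute)

lemma mat_adjoint_add:
  assumes "(A :: complex mat) \<in> carrier_mat n m" "B \<in> carrier_mat n m"
  shows "mat_adjoint (A + B) = mat_adjoint A + mat_adjoint B"
  using assms by (intro eq_matI) auto

lemma mat_adjoint_four_block_mat:
  assumes "(A :: complex mat) \<in> carrier_mat n1 m1" "B \<in> carrier_mat n1 m2"
    "C \<in> carrier_mat n2 m1" "D \<in> carrier_mat n2 m2"
  shows "mat_adjoint (four_block_mat A B C D) =
    four_block_mat (mat_adjoint A) (mat_adjoint C) (mat_adjoint B) (mat_adjoint D)"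
  using assms by (intro eq_matI) auto

lemma cnj_cscalar_prod:
  assumes "(v :: complex vec) \<in> carrier_vec n" "w \<in> carrier_vec n"
  shows "cnj (v \<bullet>c w) = w \<bullet>c v"
  using assms by (auto simp: scalar_prod_def cnj_sum mult.commute)

lemma cscalar_prod_mat_adjoint:
  assumes "(A :: complex mat) \<in> carrier_mat n m" "v \<in> carrier_vec m" "w \<in> carrier_vec n"
  shows "(A *\<^sub>v v) \<bullet>c w = v \<bullet>c (mat_adjoint A *\<^sub>v w)"
proof -
  have "(A *\<^sub>v v) \<bullet>c w = (\<Sum>i<n. \<Sum>k<m. A $$ (i, k) * v $ k * cnj (w $ i))"
    using assms by (auto simp: scalar_prod_def atLeast0LessThan sum_distrib_right)
  also have "\<dots> = (\<Sum>k<m. \<Sum>i<n. v $ k * cnj (cnj (A $$ (i, k)) * w $ i))"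
    by (subst sum.swap) (simp add: ac_simps)
  also have "\<dots> = v \<bullet>c (mat_adjoint A *\<^sub>v w)"
    using assms by (auto simp: scalar_prod_def atLeast0LessThan sum_distrib_left)
  finally show ?thesis .
qed

lemma Re_cscalar_prod_self_pos:
  assumes "(v :: complex vec) \<in> carrier_vec n" "v \<noteq> 0\<^sub>v n"
  shows "Re (v \<bullet>c v) > 0"
  using conjugate_square_greater_0_vec[OF assms(1)] assms(2) by (simp add: less_complex_def)

lemma cscalar_prod_self_real: "(v :: complex vec) \<bullet>c v = of_real (Re (v \<bullet>c v))"
  using conjugate_square_ge_0_vec[of v] by (simp add: less_eq_complex_def complex_eq_iff)

lemma hermitian_cscalar_prod:
  assumes "hermitian_mat M" "M \<in> carrier_mat n n" "v \<in> carrier_vec n" "w \<in> carrier_vec n"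
  shows "(M *\<^sub>v v) \<bullet>c w = v \<bullet>c (M *\<^sub>v w)"
  using cscalar_prod_mat_adjoint[OF assms(2-4)] assms(1) unfolding hermitian_mat_def by simp

lemma index_adjoint_mult_self:
  assumes "(W :: complex mat) \<in> carrier_mat n m" "i < m" "j < m"
  shows "(mat_adjoint W * W) $$ (i, j) = col W j \<bullet>c col W i"
  using assms by (auto simp: scalar_prod_def mult.commute intro!: sum.cong)

lemma mat_kernel_adjoint_mult_self:
  assumes B: "(B :: complex mat) \<in> carrier_mat n m"
  shows "mat_kernel (mat_adjoint B * B) = mat_kernel B"
proof -
  have BB: "mat_adjoint B * B \<in> carrier_mat m m" using B by (intro mult_carrier_mat) auto
  have "B *\<^sub>v v = 0\<^sub>v n" if v: "v \<in> carrier_vec m" and z: "(mat_adjoint B * B) *\<^sub>v v = 0\<^sub>v m" for v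
  proof -
    have "(B *\<^sub>v v) \<bullet>c (B *\<^sub>v v) = v \<bullet>c ((mat_adjoint B * B) *\<^sub>v v)"
      using cscalar_prod_mat_adjoint[OF B v, of "B *\<^sub>v v"] B v
      by (simp add: assoc_mult_mat_vec[of _ m n _ m])
    also have "\<dots> = 0" using z v by simp
    finally show ?thesis using conjugate_square_eq_0_vec[of "B *\<^sub>v v" n] B v by simp
  qed
  moreover have "(mat_adjoint B * B) *\<^sub>v v = 0\<^sub>v m" if "v \<in> carrier_vec m" "B *\<^sub>v v = 0\<^sub>v n" for v
    using that B by (auto simp: assoc_mult_mat_vec[of _ m n _ m])
  ultimately show ?thesis unfolding mat_kernel[OF B] mat_kernel[OF BB] by blast
qed

section \<open>Unitary matrices\<close>

lemma unitary_right_inverse: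
  assumes "(U :: complex mat) \<in> carrier_mat n n" "mat_adjoint U * U = 1\<^sub>m n"
  shows "U * mat_adjoint U = 1\<^sub>m n"
  using mat_mult_left_right_inverse[OF mat_adjoint_carrier_mat[OF assms(1)] assms(1,2)] .

lemma unitary_mult:
  assumes U: "(U :: complex mat) \<in> carrier_mat n n" "mat_adjoint U * U = 1\<^sub>m n"
    and V: "V \<in> carrier_mat n n" "mat_adjoint V * V = 1\<^sub>m n"
  shows "mat_adjoint (U * V) * (U * V) = 1\<^sub>m n"
proof -
  have "mat_adjoint (U * V) * (U * V) = mat_adjoint V * (mat_adjoint U * (U * V))"
    using U V by (simp add: mat_adjoint_mult[of _ n n _ n] assoc_mult_mat[of _ n n _ n _ n])
  also have "mat_adjoint U * (U * V) = V"
    using U V by (simp flip: assoc_mult_mat[of _ n n _ n _ n])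
  finally show ?thesis using V by simp
qed

lemma mat_adjoint_mult_sandwich:
  assumes A: "(A :: complex mat) \<in> carrier_mat n n"
    and U: "U \<in> carrier_mat n n" and V: "V \<in> carrier_mat n n"
  shows "mat_adjoint (U * V) * A * (U * V) = mat_adjoint V * (mat_adjoint U * A * U) * V"
proof -
  have aU: "mat_adjoint U \<in> carrier_mat n n" and aV: "mat_adjoint V \<in> carrier_mat n n"
    using U V by auto
  have UA: "mat_adjoint U * A \<in> carrier_mat n n" using aU A by simp
  have "mat_adjoint (U * V) * A * (U * V) = mat_adjoint V * (mat_adjoint U * A) * (U * V)"
    unfolding mat_adjoint_mult[OF U V] using assoc_mult_mat[OF aV aU A] by simp
  also have "\<dots> = mat_adjoint V * ((mat_adjoint U * A) * (U * V))"
    using assoc_mult_mat[OF aV UA mult_carrier_mat[OF U V]] .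
  also have "(mat_adjoint U * A) * (U * V) = (mat_adjoint U * A * U) * V"
    using assoc_mult_mat[OF UA U V] by simp
  also have "mat_adjoint V * ((mat_adjoint U * A * U) * V) = mat_adjoint V * (mat_adjoint U * A * U) * V"
    using assoc_mult_mat[OF aV mult_carrier_mat[OF UA U] V] by simp
  finally show ?thesis .
qed

lemma unitary_adjoint_mult_col:
  assumes U: "(U :: complex mat) \<in> carrier_mat n n" "mat_adjoint U * U = 1\<^sub>m n" and j: "j < n"
  shows "mat_adjoint U *\<^sub>v col U j = unit_vec n j"
  using col_mult2[OF mat_adjoint_carrier_mat[OF U(1)] U(1) j] U(2) j by simp

lemma unitary_col_cscalar_prod_self:
  assumes U: "(U :: complex mat) \<in> carrier_mat n n" "mat_adjoint U * U = 1\<^sub>m n" and j: "j < n"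
  shows "col U j \<bullet>c col U j = 1"
proof -
  have "col U j \<bullet>c col U j = (mat_adjoint U * U) $$ (j, j)"
    by (rule index_adjoint_mult_self[OF U(1) j j, symmetric])
  also have "\<dots> = 1" using U(2) j by simp
  finally show ?thesis .
qed

lemma mat_eq_on_unitary_cols:
  assumes A: "(A :: complex mat) \<in> carrier_mat n n" and B: "B \<in> carrier_mat n n"
    and U: "U \<in> carrier_mat n n" "mat_adjoint U * U = 1\<^sub>m n"
    and eq: "\<And>j. j < n \<Longrightarrow> A *\<^sub>v col U j = B *\<^sub>v col U j"
  shows "A = B"
proof -
  have aU: "mat_adjoint U \<in> carrier_mat n n" using U by simp
  have "A * U = B * U"
  proof (rule mat_col_eqI)
    fix j assume "j < dim_col (B * U)"
    hence j: "j < n" using U(1) by simp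
    show "col (A * U) j = col (B * U) j"
      using col_mult2[OF A U(1) j] col_mult2[OF B U(1) j] eq[OF j] by simp
  qed (use A B U(1) in simp_all)
  hence "A * (U * mat_adjoint U) = B * (U * mat_adjoint U)"
    using assoc_mult_mat[OF A U(1) aU] assoc_mult_mat[OF B U(1) aU] by simp
  thus ?thesis using unitary_right_inverse[OF U] A B by simp
qed

lemma unitary_of_corthogonal:
  assumes ws: "set ws \<subseteq> carrier_vec n" "length ws = n" "corthogonal ws"
  defines "W \<equiv> mat_of_cols n (map (\<lambda>w. of_real (1 / sqrt (Re (w \<bullet>c w))) \<cdot>\<^sub>v w) ws)"
  shows "W \<in> carrier_mat n n" "mat_adjoint W * W = 1\<^sub>m n"
proof -
  define c where "c = (\<lambda>w :: complex vec. complex_of_real (1 / sqrt (Re (w \<bullet>c w))))"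
  have wsi: "ws ! i \<in> carrier_vec n" if "i < n" for i using ws that by auto
  have colW: "col W i = c (ws ! i) \<cdot>\<^sub>v ws ! i" if "i < n" for i
    unfolding W_def c_def using that wsi[OF that] ws(2) by simp
  show W: "W \<in> carrier_mat n n"
    unfolding W_def using mat_of_cols_carrier(1)[of n "map _ ws"] ws(2) by simp
  show "mat_adjoint W * W = 1\<^sub>m n"
  proof (rule eq_matI)
    fix i j assume "i < dim_row (1\<^sub>m n)" "j < dim_col (1\<^sub>m n)"
    hence i: "i < n" and j: "j < n" by auto
    have "(mat_adjoint W * W) $$ (i, j) = c (ws ! j) * cnj (c (ws ! i)) * (ws ! j \<bullet>c ws ! i)"
      unfolding index_adjoint_mult_self[OF W i j] colW[OF i] colW[OF j]
      using wsi[OF i] wsi[OF j] by (simp add: conjugate_smult_vec)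
    also have "\<dots> = 1\<^sub>m n $$ (i, j)"
    proof (cases "i = j")
      case True
      let ?w = "ws ! i"
      have "?w \<bullet>c ?w \<noteq> 0" using ws(2,3) i unfolding corthogonal_def by auto
      hence "?w \<noteq> 0\<^sub>v n" by auto
      hence "Re (?w \<bullet>c ?w) > 0" using Re_cscalar_prod_self_pos wsi[OF i] by blast
      hence "c ?w * cnj (c ?w) * (?w \<bullet>c ?w) = 1"
        unfolding c_def by (subst cscalar_prod_self_real) (simp flip: of_real_mult)
      thus ?thesis using True i by simp
    next
      case False
      hence "ws ! j \<bullet>c ws ! i = 0" using ws(2,3) i j unfolding corthogonal_def by blast
      thus ?thesis using False i j by simp
    qed
    finally show "(mat_adjoint W * W) $$ (i, j) = 1\<^sub>m n $$ (i, j)" .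
  qed (use W in auto)
qed

lemma unitary_extension:
  assumes v: "(v :: complex vec) \<in> carrier_vec n" and v0: "v \<noteq> 0\<^sub>v n"
  shows "\<exists>W c. W \<in> carrier_mat n n \<and> mat_adjoint W * W = 1\<^sub>m n \<and> col W 0 = c \<cdot>\<^sub>v v"
proof -
  interpret cof_vec_space n "TYPE(complex)" .
  define b where "b = basis_completion v"
  from basis_completion[OF v v0, folded b_def]
  have b: "distinct b" "\<not> lin_dep (set b)" "set b \<subseteq> carrier_vec n" "hd b = v" "length b = n"
    by auto
  have "n > 0" using v v0 by (cases n) auto
  then obtain vs where bv: "b = v # vs" using b(4,5) by (cases b) auto
  define ws where "ws = gram_schmidt n b"
  from gram_schmidt_result[OF b(3,1,2) ws_def]
  have ws: "set ws \<subseteq> carrier_vec n" "length ws = n" "corthogonal ws" using b(5) by auto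
  have "ws ! 0 = v" using gram_schmidt_hd[OF v, of vs] \<open>n > 0\<close> ws(2)
    unfolding ws_def bv by (cases "gram_schmidt n (v # vs)") auto
  note W = unitary_of_corthogonal[OF ws]
  moreover have "col (mat_of_cols n (map (\<lambda>w. of_real (1 / sqrt (Re (w \<bullet>c w))) \<cdot>\<^sub>v w) ws)) 0
      = of_real (1 / sqrt (Re (v \<bullet>c v))) \<cdot>\<^sub>v v"
    using \<open>ws ! 0 = v\<close> \<open>n > 0\<close> ws(2) v by simp
  ultimately show ?thesis by blast
qed

section \<open>The spectral theorem for Hermitian matrices\<close>

lemma hermitian_four_block_split:
  assumes h: "hermitian_mat M" and M: "M \<in> carrier_mat (Suc m) (Suc m)"
    and col0: "\<And>i. 0 < i \<Longrightarrow> i < Suc m \<Longrightarrow> M $$ (i, 0) = 0"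
  defines "M' \<equiv> mat m m (\<lambda>(i, j). M $$ (Suc i, Suc j))"
  shows "M = four_block_mat (mat 1 1 (\<lambda>_. M $$ (0, 0))) (0\<^sub>m 1 m) (0\<^sub>m m 1) M'"
    and "hermitian_mat M'"
proof -
  have adj: "cnj (M $$ (j, i)) = M $$ (i, j)" if "i < Suc m" "j < Suc m" for i j
    using arg_cong[OF h[unfolded hermitian_mat_def, THEN conjunct2], of "\<lambda>X. X $$ (i, j)"] M that
    by simp
  show "M = four_block_mat (mat 1 1 (\<lambda>_. M $$ (0, 0))) (0\<^sub>m 1 m) (0\<^sub>m m 1) M'"
  proof (rule eq_matI)
    fix i j assume ij: "i < dim_row (four_block_mat (mat 1 1 (\<lambda>_. M $$ (0, 0))) (0\<^sub>m 1 m) (0\<^sub>m m 1) M')"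
      "j < dim_col (four_block_mat (mat 1 1 (\<lambda>_. M $$ (0, 0))) (0\<^sub>m 1 m) (0\<^sub>m m 1) M')"
    have row0: "M $$ (0, j) = 0" if "0 < j" "j < Suc m" for j
      using adj[of 0 j] col0[OF that] that by simp
    show "M $$ (i, j) = four_block_mat (mat 1 1 (\<lambda>_. M $$ (0, 0))) (0\<^sub>m 1 m) (0\<^sub>m m 1) M' $$ (i, j)"
      using ij col0 row0 unfolding M'_def by (cases i; cases j) auto
  qed (use M M'_def in auto)
  show "hermitian_mat M'"
    unfolding hermitian_mat_def M'_def using adj by auto
qed

lemma adjoint_four_block_one:
  assumes "(U :: complex mat) \<in> carrier_mat m m"
  shows "mat_adjoint (four_block_mat (1\<^sub>m 1) (0\<^sub>m 1 m) (0\<^sub>m m 1) U)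
    = four_block_mat (1\<^sub>m 1) (0\<^sub>m 1 m) (0\<^sub>m m 1) (mat_adjoint U)"
  using assms by (subst mat_adjoint_four_block_mat) auto

lemma unitary_four_block_one:
  assumes "(U :: complex mat) \<in> carrier_mat m m" "mat_adjoint U * U = 1\<^sub>m m"
  shows "mat_adjoint (four_block_mat (1\<^sub>m 1) (0\<^sub>m 1 m) (0\<^sub>m m 1) U)
    * four_block_mat (1\<^sub>m 1) (0\<^sub>m 1 m) (0\<^sub>m m 1) U = 1\<^sub>m (Suc m)"
  using assms unfolding adjoint_four_block_one[OF assms(1)]
  by (subst mult_four_block_mat) (auto simp: four_block_one_mat[of 1 m, simplified])

lemma four_block_one_sandwich:
  assumes U: "(U :: complex mat) \<in> carrier_mat m m" and M: "M \<in> carrier_mat m m"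
  shows "mat_adjoint (four_block_mat (1\<^sub>m 1) (0\<^sub>m 1 m) (0\<^sub>m m 1) U)
      * four_block_mat (mat 1 1 (\<lambda>_. a)) (0\<^sub>m 1 m) (0\<^sub>m m 1) M
      * four_block_mat (1\<^sub>m 1) (0\<^sub>m 1 m) (0\<^sub>m m 1) U
    = four_block_mat (mat 1 1 (\<lambda>_. a)) (0\<^sub>m 1 m) (0\<^sub>m m 1) (mat_adjoint U * M * U)"
proof -
  have aU: "mat_adjoint U \<in> carrier_mat m m" using U by simp
  have aUM: "mat_adjoint U * M \<in> carrier_mat m m" using aU M by simp
  have "four_block_mat (1\<^sub>m 1) (0\<^sub>m 1 m) (0\<^sub>m m 1) (mat_adjoint U)
      * four_block_mat (mat 1 1 (\<lambda>_. a)) (0\<^sub>m 1 m) (0\<^sub>m m 1) M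
    = four_block_mat (mat 1 1 (\<lambda>_. a)) (0\<^sub>m 1 m) (0\<^sub>m m 1) (mat_adjoint U * M)"
    using aU M aUM by (subst mult_four_block_mat[OF one_carrier_mat zero_carrier_mat zero_carrier_mat aU
        _ zero_carrier_mat zero_carrier_mat M]) (auto simp: right_mult_zero_mat[OF aU])
  moreover have "four_block_mat (mat 1 1 (\<lambda>_. a)) (0\<^sub>m 1 m) (0\<^sub>m m 1) (mat_adjoint U * M)
      * four_block_mat (1\<^sub>m 1) (0\<^sub>m 1 m) (0\<^sub>m m 1) U
    = four_block_mat (mat 1 1 (\<lambda>_. a)) (0\<^sub>m 1 m) (0\<^sub>m m 1) (mat_adjoint U * M * U)"
    using U aUM by (subst mult_four_block_mat[OF _ zero_carrier_mat zero_carrier_mat aUM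
        one_carrier_mat zero_carrier_mat zero_carrier_mat U]) auto
  ultimately show ?thesis unfolding adjoint_four_block_one[OF U] by simp
qed

lemma hermitian_deflation:
  assumes h: "hermitian_mat A" and A: "A \<in> carrier_mat (Suc m) (Suc m)"
  shows "\<exists>W a M'. W \<in> carrier_mat (Suc m) (Suc m) \<and> mat_adjoint W * W = 1\<^sub>m (Suc m) \<and>
    M' \<in> carrier_mat m m \<and> hermitian_mat M' \<and>
    mat_adjoint W * A * W = four_block_mat (mat 1 1 (\<lambda>_. a)) (0\<^sub>m 1 m) (0\<^sub>m m 1) M'"
proof -
  obtain l where "eigenvalue A l" using spectrum_non_empty[OF A] unfolding spectrum_def by auto
  then obtain v where v: "v \<in> carrier_vec (Suc m)" "v \<noteq> 0\<^sub>v (Suc m)" and Av: "A *\<^sub>v v = l \<cdot>\<^sub>v v"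
    using find_eigenvector[OF A] A unfolding eigenvector_def by fastforce
  obtain W c where W: "W \<in> carrier_mat (Suc m) (Suc m)" "mat_adjoint W * W = 1\<^sub>m (Suc m)"
    and W0: "col W 0 = c \<cdot>\<^sub>v v"
    using unitary_extension[OF v] by blast
  have aW: "mat_adjoint W \<in> carrier_mat (Suc m) (Suc m)" using W by simp
  define M where "M = mat_adjoint W * A * W"
  have M: "M \<in> carrier_mat (Suc m) (Suc m)" unfolding M_def using A W by (auto intro!: mult_carrier_mat)
  have hM: "hermitian_mat M"
    using h M aW A W unfolding M_def hermitian_mat_def
    by (simp add: mat_adjoint_mult[of _ "Suc m" "Suc m" _ "Suc m"] assoc_mult_mat[of _ "Suc m" "Suc m" _ "Suc m" _ "Suc m"])
  have aWA: "mat_adjoint W * A \<in> carrier_mat (Suc m) (Suc m)" using aW A by simp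
  have "col M 0 = (mat_adjoint W * A) *\<^sub>v col W 0"
    unfolding M_def by (rule col_mult2[OF aWA W(1)]) simp
  also have "\<dots> = mat_adjoint W *\<^sub>v (A *\<^sub>v col W 0)"
    by (rule assoc_mult_mat_vec[OF aW A]) (simp add: W0 v)
  also have "A *\<^sub>v col W 0 = l \<cdot>\<^sub>v col W 0"
    unfolding W0 using A v Av by (simp add: mult_mat_vec smult_smult_assoc mult.commute)
  also have "mat_adjoint W *\<^sub>v (l \<cdot>\<^sub>v col W 0) = l \<cdot>\<^sub>v (mat_adjoint W *\<^sub>v col W 0)"
    by (rule mult_mat_vec[OF aW]) (simp add: W0 v)
  also have "mat_adjoint W *\<^sub>v col W 0 = col (mat_adjoint W * W) 0"
    by (rule col_mult2[OF aW W(1), symmetric]) simp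
  finally have colM: "col M 0 = l \<cdot>\<^sub>v unit_vec (Suc m) 0" using W(2) by simp
  have col0: "M $$ (i, 0) = 0" if "0 < i" "i < Suc m" for i
    using arg_cong[of _ _ "\<lambda>x. x $ i", OF colM] M that by auto
  define M' where "M' = mat m m (\<lambda>(i, j). M $$ (Suc i, Suc j))"
  have "M = four_block_mat (mat 1 1 (\<lambda>_. M $$ (0, 0))) (0\<^sub>m 1 m) (0\<^sub>m m 1) M'"
    "hermitian_mat M'"
    using hermitian_four_block_split[OF hM M] col0 unfolding M'_def by blast+
  moreover have "M' \<in> carrier_mat m m" unfolding M'_def by simp
  ultimately show ?thesis using W unfolding M_def by blast
qed

lemma hermitian_unitarily_diagonalizable:
  assumes "hermitian_mat A" "A \<in> carrier_mat n n"
  shows "\<exists>U. U \<in> carrier_mat n n \<and> mat_adjoint U * U = 1\<^sub>m n \<and> diagonal_mat (mat_adjoint U * A * U)"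
  using assms
proof (induction n arbitrary: A)
  case 0
  thus ?case by (intro exI[of _ "1\<^sub>m 0"]) (auto simp: diagonal_mat_def)
next
  case (Suc m)
  obtain W a M' where W: "W \<in> carrier_mat (Suc m) (Suc m)" "mat_adjoint W * W = 1\<^sub>m (Suc m)"
    and M': "M' \<in> carrier_mat m m" "hermitian_mat M'"
    and WAW: "mat_adjoint W * A * W = four_block_mat (mat 1 1 (\<lambda>_. a)) (0\<^sub>m 1 m) (0\<^sub>m m 1) M'"
    using hermitian_deflation[OF Suc.prems] by blast
  obtain U' where U': "U' \<in> carrier_mat m m" "mat_adjoint U' * U' = 1\<^sub>m m"
    and diag: "diagonal_mat (mat_adjoint U' * M' * U')"
    using Suc.IH[OF M'(2,1)] by blast
  define V where "V = four_block_mat (1\<^sub>m 1) (0\<^sub>m 1 m) (0\<^sub>m m 1) U'"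
  have V: "V \<in> carrier_mat (Suc m) (Suc m)" "mat_adjoint V * V = 1\<^sub>m (Suc m)"
    unfolding V_def using U' unitary_four_block_one[OF U'] by auto
  have "mat_adjoint (W * V) * A * (W * V) = mat_adjoint V * (mat_adjoint W * A * W) * V"
    by (rule mat_adjoint_mult_sandwich[OF Suc.prems(2) W(1) V(1)])
  also have "\<dots> = four_block_mat (mat 1 1 (\<lambda>_. a)) (0\<^sub>m 1 m) (0\<^sub>m m 1) (mat_adjoint U' * M' * U')"
    unfolding WAW V_def by (rule four_block_one_sandwich[OF U'(1) M'(1)])
  finally have "diagonal_mat (mat_adjoint (W * V) * A * (W * V))"
    using diag U'(1) unfolding diagonal_mat_def by auto
  moreover have "W * V \<in> carrier_mat (Suc m) (Suc m)" using W V by simp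
  ultimately show ?case using unitary_mult[OF W V] by blast
qed

lemma mult_unit_vec_col:
  assumes "(A :: 'a :: semiring_1 mat) \<in> carrier_mat m n" "j < n"
  shows "A *\<^sub>v unit_vec n j = col A j"
proof (rule eq_vecI)
  fix i assume "i < dim_vec (col A j)"
  thus "(A *\<^sub>v unit_vec n j) $ i = col A j $ i" using assms by simp
qed (use assms in simp)

lemma diagonal_mat_col:
  assumes "diagonal_mat (D :: 'a :: semiring_1 mat)" "D \<in> carrier_mat n n" "j < n"
  shows "col D j = D $$ (j, j) \<cdot>\<^sub>v unit_vec n j"
proof (rule eq_vecI)
  fix i assume "i < dim_vec (D $$ (j, j) \<cdot>\<^sub>v unit_vec n j)"
  thus "col D j $ i = (D $$ (j, j) \<cdot>\<^sub>v unit_vec n j) $ i"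
    using assms unfolding diagonal_mat_def by (cases "i = j") auto
qed (use assms in simp)

lemma hermitian_eigenbasis:
  assumes h: "hermitian_mat A" and A: "A \<in> carrier_mat n n"
  shows "\<exists>U d. U \<in> carrier_mat n n \<and> mat_adjoint U * U = 1\<^sub>m n \<and>
    (\<forall>j<n. A *\<^sub>v col U j = complex_of_real (d j) \<cdot>\<^sub>v col U j)"
proof -
  obtain U where U: "U \<in> carrier_mat n n" "mat_adjoint U * U = 1\<^sub>m n"
    and diag: "diagonal_mat (mat_adjoint U * A * U)"
    using hermitian_unitarily_diagonalizable[OF assms] by blast
  define D where "D = mat_adjoint U * A * U"
  define d where "d = (\<lambda>j. Re (D $$ (j, j)))"
  have aU: "mat_adjoint U \<in> carrier_mat n n" using U by simp
  have D: "D \<in> carrier_mat n n" unfolding D_def using aU A U by (auto intro!: mult_carrier_mat)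
  have "mat_adjoint D = D"
    using h unfolding D_def hermitian_mat_def using aU A U
    by (simp add: mat_adjoint_mult[of _ n n _ n] assoc_mult_mat[of _ n n _ n _ n])
  have real: "D $$ (j, j) = complex_of_real (d j)" if "j < n" for j
  proof -
    have "cnj (D $$ (j, j)) = D $$ (j, j)"
      using arg_cong[of _ _ "\<lambda>X. X $$ (j, j)", OF \<open>mat_adjoint D = D\<close>] D that by simp
    hence "D $$ (j, j) \<in> \<real>" by (simp add: Reals_cnj_iff)
    thus ?thesis unfolding d_def by (rule of_real_Re[symmetric])
  qed
  have "U * D = U * (mat_adjoint U * (A * U))"
    unfolding D_def using assoc_mult_mat[OF aU A U(1)] by simp
  also have "\<dots> = (U * mat_adjoint U) * (A * U)"
    using assoc_mult_mat[OF U(1) aU mult_carrier_mat[OF A U(1)]] by simp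
  finally have AU: "A * U = U * D" using unitary_right_inverse[OF U] A U by simp
  have "A *\<^sub>v col U j = complex_of_real (d j) \<cdot>\<^sub>v col U j" if j: "j < n" for j
  proof -
    have "A *\<^sub>v col U j = col (U * D) j" unfolding AU[symmetric] by (rule col_mult2[OF A U(1) j, symmetric])
    also have "\<dots> = U *\<^sub>v col D j" by (rule col_mult2[OF U(1) D j])
    also have "col D j = D $$ (j, j) \<cdot>\<^sub>v unit_vec n j"
      using diagonal_mat_col[OF diag[folded D_def] D j] .
    also have "U *\<^sub>v (D $$ (j, j) \<cdot>\<^sub>v unit_vec n j) = D $$ (j, j) \<cdot>\<^sub>v col U j"
      unfolding mult_mat_vec[OF U(1) unit_vec_carrier] mult_unit_vec_col[OF U(1) j] ..
    finally show ?thesis unfolding real[OF j] .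
  qed
  thus ?thesis using U by blast
qed

section \<open>Positive semidefinite matrices and their square roots\<close>

lemma psd_mat_hermitian: "psd_mat M \<Longrightarrow> hermitian_mat M"
  unfolding psd_mat_def by simp

lemma psd_mat_carrier: "psd_mat M \<Longrightarrow> M \<in> carrier_mat (dim_row M) (dim_row M)"
  unfolding psd_mat_def hermitian_mat_def by (auto intro!: carrier_matI)

lemma psd_mat_adjoint_mult_self:
  assumes B: "(B :: complex mat) \<in> carrier_mat n m"
  shows "psd_mat (mat_adjoint B * B)"
  unfolding psd_mat_def hermitian_mat_def
proof (intro conjI ballI)
  show "square_mat (mat_adjoint B * B)" using B by simp
  show "mat_adjoint (mat_adjoint B * B) = mat_adjoint B * B"
    using mat_adjoint_mult[of "mat_adjoint B" m n B m] B by simp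
  fix v :: "complex vec" assume "v \<in> carrier_vec (dim_row (mat_adjoint B * B))"
  hence v: "v \<in> carrier_vec m" using B by simp
  have "((mat_adjoint B * B) *\<^sub>v v) \<bullet>c v = (B *\<^sub>v v) \<bullet>c (B *\<^sub>v v)"
    using cscalar_prod_mat_adjoint[of "mat_adjoint B" m n "B *\<^sub>v v" v] B v
    by (simp add: assoc_mult_mat_vec[of _ m n _ m])
  thus "0 \<le> Re (((mat_adjoint B * B) *\<^sub>v v) \<bullet>c v)"
    using conjugate_square_ge_0_vec[of "B *\<^sub>v v"] by (simp add: less_eq_complex_def)
qed

lemma psd_mat_shift_injective:
  assumes pT: "psd_mat T" and T: "T \<in> carrier_mat n n" and w: "w \<in> carrier_vec n" and s: "s > 0"
    and zero: "T *\<^sub>v w + complex_of_real s \<cdot>\<^sub>v w = 0\<^sub>v n"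
  shows "w = 0\<^sub>v n"
proof -
  have Tw: "T *\<^sub>v w \<in> carrier_vec n" using T w by simp
  have "0 = (T *\<^sub>v w + complex_of_real s \<cdot>\<^sub>v w) \<bullet>c w" unfolding zero using w by simp
  also have "\<dots> = (T *\<^sub>v w) \<bullet>c w + complex_of_real s * (w \<bullet>c w)"
    using Tw w by (simp add: add_scalar_prod_distrib[of _ n])
  finally have "(T *\<^sub>v w) \<bullet>c w + complex_of_real s * (w \<bullet>c w) = 0" by simp
  hence "Re ((T *\<^sub>v w) \<bullet>c w + complex_of_real s * (w \<bullet>c w)) = 0" by (simp only: zero_complex.sel)
  hence "Re ((T *\<^sub>v w) \<bullet>c w) + s * Re (w \<bullet>c w) = 0" by simp
  moreover have "Re ((T *\<^sub>v w) \<bullet>c w) \<ge> 0" using pT T w unfolding psd_mat_def by auto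
  moreover have "Re (w \<bullet>c w) \<ge> 0"
    using conjugate_square_ge_0_vec[of w] by (simp add: less_eq_complex_def)
  ultimately have "Re (w \<bullet>c w) = 0" using s by (simp add: add_nonneg_eq_0_iff)
  thus ?thesis using Re_cscalar_prod_self_pos[OF w] by (cases "w = 0\<^sub>v n") auto
qed

lemma psd_mat_square_eigenvector:
  assumes pT: "psd_mat T" and T: "T \<in> carrier_mat n n" and u: "u \<in> carrier_vec n"
    and eigen: "(T * T) *\<^sub>v u = complex_of_real d \<cdot>\<^sub>v u" and d: "d \<ge> 0"
  shows "T *\<^sub>v u = complex_of_real (sqrt d) \<cdot>\<^sub>v u"
proof (cases "d = 0")
  case True
  have hT: "mat_adjoint T = T" using pT unfolding psd_mat_def hermitian_mat_def by simp
  have "u \<in> mat_kernel (mat_adjoint T * T)"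
    using eigen True T u by (intro mat_kernelI[of _ n n]) (auto simp: hT)
  thus ?thesis using True T u unfolding mat_kernel_adjoint_mult_self[OF T] mat_kernel[OF T] by auto
next
  case False
  define s where "s = sqrt d"
  have s: "s > 0" unfolding s_def using d False by simp
  (* (T + sqrt d) (T u - sqrt d u) = (T^2 - d) u = 0 *)
  define w where "w = T *\<^sub>v u - complex_of_real s \<cdot>\<^sub>v u"
  have w: "w \<in> carrier_vec n" unfolding w_def using T u by simp
  have "T *\<^sub>v w + complex_of_real s \<cdot>\<^sub>v w = 0\<^sub>v n"
  proof (rule eq_vecI)
    fix i assume "i < dim_vec (0\<^sub>v n :: complex vec)"
    hence i: "i < n" by simp
    have Tw_eq: "T *\<^sub>v w = (T * T) *\<^sub>v u - complex_of_real s \<cdot>\<^sub>v (T *\<^sub>v u)"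
      unfolding w_def using T u
      by (simp add: mult_minus_distrib_mat_vec[OF T] mult_mat_vec[OF T] assoc_mult_mat_vec[of _ n n _ n])
    have "complex_of_real s * complex_of_real s = complex_of_real d"
      unfolding s_def of_real_mult[symmetric] using d by simp
    thus "(T *\<^sub>v w + complex_of_real s \<cdot>\<^sub>v w) $ i = 0\<^sub>v n $ i"
      unfolding Tw_eq eigen unfolding w_def using i T u by (simp add: algebra_simps)
  qed (use T w in auto)
  hence w0: "w = 0\<^sub>v n" by (rule psd_mat_shift_injective[OF pT T w s])
  show ?thesis
  proof (rule eq_vecI)
    fix i assume "i < dim_vec (complex_of_real (sqrt d) \<cdot>\<^sub>v u)"
    hence i: "i < n" using u by simp
    have "w $ i = 0" using w0 i by simp
    thus "(T *\<^sub>v u) $ i = (complex_of_real (sqrt d) \<cdot>\<^sub>v u) $ i"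
      unfolding w_def s_def using i T u by simp
  qed (use T u in simp)
qed

lemma mat_diag_mult_unit_vec:
  fixes f :: "nat \<Rightarrow> 'a :: semiring_1"
  assumes "j < n"
  shows "mat_diag n f *\<^sub>v unit_vec n j = f j \<cdot>\<^sub>v unit_vec n j"
  using assms by (intro eq_vecI) (auto simp: mat_diag_def)

lemma psd_mat_with_eigenbasis:
  assumes U: "(U :: complex mat) \<in> carrier_mat n n" "mat_adjoint U * U = 1\<^sub>m n"
    and s: "\<And>j. j < n \<Longrightarrow> s j \<ge> 0"
  shows "\<exists>S. S \<in> carrier_mat n n \<and> psd_mat S \<and>
    (\<forall>j<n. S *\<^sub>v col U j = complex_of_real (s j) \<cdot>\<^sub>v col U j)"
proof -
  (* S := R^H R with R = diag (sqrt s) U^H, which is positive semidefinite by construction *)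
  define g where "g = (\<lambda>j. complex_of_real (sqrt (s j)))"
  define D where "D = mat_diag n g"
  define R where "R = D * mat_adjoint U"
  have D: "D \<in> carrier_mat n n" unfolding D_def by simp
  have aU: "mat_adjoint U \<in> carrier_mat n n" using U by simp
  have R: "R \<in> carrier_mat n n" unfolding R_def using mult_carrier_mat[OF D aU] .
  have aR: "mat_adjoint R = U * D"
  proof -
    have "mat_adjoint D = D" unfolding D_def g_def mat_diag_def by (rule eq_matI) auto
    thus ?thesis unfolding R_def using mat_adjoint_mult[OF D aU] by simp
  qed
  have UD: "U * D \<in> carrier_mat n n" using U(1) D by simp
  have "(mat_adjoint R * R) *\<^sub>v col U j = complex_of_real (s j) \<cdot>\<^sub>v col U j" if j: "j < n" for j
  proof -
    have cU: "col U j \<in> carrier_vec n" using U(1) by (intro carrier_vecI) simp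
    have De: "D *\<^sub>v unit_vec n j = g j \<cdot>\<^sub>v unit_vec n j"
      unfolding D_def by (rule mat_diag_mult_unit_vec[OF j])
    have "R *\<^sub>v col U j = D *\<^sub>v (mat_adjoint U *\<^sub>v col U j)"
      unfolding R_def by (rule assoc_mult_mat_vec[OF D aU cU])
    also have "\<dots> = g j \<cdot>\<^sub>v unit_vec n j" unfolding unitary_adjoint_mult_col[OF U j] De ..
    finally have "(mat_adjoint R * R) *\<^sub>v col U j = (U * D) *\<^sub>v (g j \<cdot>\<^sub>v unit_vec n j)"
      using assoc_mult_mat_vec[OF mat_adjoint_carrier_mat[OF R] R cU] unfolding aR by simp
    also have "\<dots> = g j \<cdot>\<^sub>v (U *\<^sub>v (D *\<^sub>v unit_vec n j))"
      using mult_mat_vec[OF UD] assoc_mult_mat_vec[OF U(1) D] by simp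
    also have "\<dots> = (g j * g j) \<cdot>\<^sub>v col U j"
      unfolding De mult_mat_vec[OF U(1) unit_vec_carrier] mult_unit_vec_col[OF U(1) j]
      by (simp add: smult_smult_assoc)
    also have "g j * g j = complex_of_real (s j)"
      unfolding g_def of_real_mult[symmetric] using s[OF j] by simp
    finally show ?thesis .
  qed
  moreover have "mat_adjoint R * R \<in> carrier_mat n n"
    using mult_carrier_mat[OF mat_adjoint_carrier_mat[OF R] R] .
  ultimately show ?thesis using psd_mat_adjoint_mult_self[OF R] by blast
qed

lemma psd_mat_eigenvalue_nonneg:
  assumes "psd_mat X" "X \<in> carrier_mat n n" "u \<in> carrier_vec n" "u \<bullet>c u = 1"
    and "X *\<^sub>v u = complex_of_real d \<cdot>\<^sub>v u"
  shows "d \<ge> 0"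
proof -
  have "(X *\<^sub>v u) \<bullet>c u = complex_of_real d" using assms(3-5) by simp
  moreover have "Re ((X *\<^sub>v u) \<bullet>c u) \<ge> 0" using assms(1-3) unfolding psd_mat_def by auto
  ultimately show ?thesis by simp
qed

lemma psd_sqrt_exists_unique:
  assumes pX: "psd_mat X" and X: "X \<in> carrier_mat n n"
  shows "\<exists>!S. psd_mat S \<and> S * S = X"
proof -
  obtain U d where U: "U \<in> carrier_mat n n" "mat_adjoint U * U = 1\<^sub>m n"
    and eigen: "\<And>j. j < n \<Longrightarrow> X *\<^sub>v col U j = complex_of_real (d j) \<cdot>\<^sub>v col U j"
    using hermitian_eigenbasis[OF psd_mat_hermitian[OF pX] X] by blast
  have cU: "col U j \<in> carrier_vec n" for j using U(1) by (intro carrier_vecI) simp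
  have d: "d j \<ge> 0" if j: "j < n" for j
    by (rule psd_mat_eigenvalue_nonneg[OF pX X cU unitary_col_cscalar_prod_self[OF U j] eigen[OF j]])
  have "\<And>j. j < n \<Longrightarrow> sqrt (d j) \<ge> 0" using d by simp
  then obtain S where S: "S \<in> carrier_mat n n" "psd_mat S"
    and S_eigen: "\<And>j. j < n \<Longrightarrow> S *\<^sub>v col U j = complex_of_real (sqrt (d j)) \<cdot>\<^sub>v col U j"
    using psd_mat_with_eigenbasis[OF U, of "\<lambda>j. sqrt (d j)"] by blast
  have "S * S = X"
  proof (rule mat_eq_on_unitary_cols[OF mult_carrier_mat[OF S(1) S(1)] X U])
    fix j assume j: "j < n"
    have "(S * S) *\<^sub>v col U j = S *\<^sub>v (S *\<^sub>v col U j)" by (rule assoc_mult_mat_vec[OF S(1) S(1) cU])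
    also have "\<dots> = S *\<^sub>v (complex_of_real (sqrt (d j)) \<cdot>\<^sub>v col U j)"
      by (simp only: S_eigen[OF j])
    also have "\<dots> = complex_of_real (sqrt (d j)) \<cdot>\<^sub>v (S *\<^sub>v col U j)"
      by (rule mult_mat_vec[OF S(1) cU])
    also have "\<dots> = (complex_of_real (sqrt (d j)) * complex_of_real (sqrt (d j))) \<cdot>\<^sub>v col U j"
      by (simp only: S_eigen[OF j] smult_smult_assoc)
    also have "complex_of_real (sqrt (d j)) * complex_of_real (sqrt (d j)) = complex_of_real (d j)"
      using d[OF j] by (simp flip: of_real_mult)
    finally show "(S * S) *\<^sub>v col U j = X *\<^sub>v col U j" unfolding eigen[OF j] .
  qed
  moreover have "T = S" if T: "psd_mat T" "T * T = X" for T
  proof -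
    have "dim_row T = n" using arg_cong[OF T(2), of dim_row] X by simp
    hence T': "T \<in> carrier_mat n n" using psd_mat_carrier[OF T(1)] by (simp only:)
    show ?thesis
    proof (rule mat_eq_on_unitary_cols[OF T' S(1) U])
      fix j assume j: "j < n"
      have "(T * T) *\<^sub>v col U j = complex_of_real (d j) \<cdot>\<^sub>v col U j"
        unfolding T(2) by (rule eigen[OF j])
      hence "T *\<^sub>v col U j = complex_of_real (sqrt (d j)) \<cdot>\<^sub>v col U j"
        by (rule psd_mat_square_eigenvector[OF T(1) T' cU _ d[OF j]])
      thus "T *\<^sub>v col U j = S *\<^sub>v col U j" unfolding S_eigen[OF j] .
    qed
  qed
  ultimately show ?thesis using S(2) by blast
qed

lemma
  assumes "psd_mat X" "X \<in> carrier_mat n n"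
  shows psd_sqrt_mat: "psd_mat (sqrt_mat X)"
    and sqrt_mat_mult_self: "sqrt_mat X * sqrt_mat X = X"
    and sqrt_mat_carrier: "sqrt_mat X \<in> carrier_mat n n"
proof -
  have "psd_mat (sqrt_mat X) \<and> sqrt_mat X * sqrt_mat X = X"
    unfolding sqrt_mat_def by (rule theI'[OF psd_sqrt_exists_unique[OF assms]])
  thus psd: "psd_mat (sqrt_mat X)" and sq: "sqrt_mat X * sqrt_mat X = X" by auto
  have "dim_row (sqrt_mat X) = n" using arg_cong[OF sq, of dim_row] assms(2) by simp
  thus "sqrt_mat X \<in> carrier_mat n n" using psd_mat_carrier[OF psd] by (simp only:)
qed

lemma mat_kernel_sqrt_mat:
  assumes "psd_mat X" "X \<in> carrier_mat n n"
  shows "mat_kernel (sqrt_mat X) = mat_kernel X"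
proof -
  have "mat_adjoint (sqrt_mat X) = sqrt_mat X"
    using psd_mat_hermitian[OF psd_sqrt_mat[OF assms]] unfolding hermitian_mat_def by simp
  thus ?thesis
    using mat_kernel_adjoint_mult_self[OF sqrt_mat_carrier[OF assms]] sqrt_mat_mult_self[OF assms]
    by simp
qed

lemma psd_mat_form_zero:
  assumes pM: "psd_mat M" and M: "M \<in> carrier_mat n n" and v: "v \<in> carrier_vec n"
    and zero: "Re ((M *\<^sub>v v) \<bullet>c v) = 0"
  shows "M *\<^sub>v v = 0\<^sub>v n"
proof -
  define S where "S = sqrt_mat M"
  have S: "S \<in> carrier_mat n n" "hermitian_mat S" "S * S = M"
    unfolding S_def using sqrt_mat_carrier[OF pM M] psd_mat_hermitian[OF psd_sqrt_mat[OF pM M]]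
      sqrt_mat_mult_self[OF pM M] by auto
  have Sv: "S *\<^sub>v v \<in> carrier_vec n" using S(1) v by simp
  have MSS: "M *\<^sub>v v = S *\<^sub>v (S *\<^sub>v v)" using assoc_mult_mat_vec[OF S(1) S(1) v] S(3) by simp
  have "Re ((S *\<^sub>v v) \<bullet>c (S *\<^sub>v v)) = 0"
    using zero hermitian_cscalar_prod[OF S(2,1) Sv v] unfolding MSS by simp
  hence "S *\<^sub>v v = 0\<^sub>v n" using Re_cscalar_prod_self_pos[OF Sv] by (cases "S *\<^sub>v v = 0\<^sub>v n") auto
  thus ?thesis unfolding MSS using S(1) by auto
qed

lemma pd_mat_add_iff_mat_kernel:
  assumes pA: "psd_mat A" and pS: "psd_mat S" and A: "A \<in> carrier_mat n n" and S: "S \<in> carrier_mat n n"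
  shows "pd_mat (A + S) \<longleftrightarrow> mat_kernel A \<inter> mat_kernel S = {0\<^sub>v n}"
proof -
  have herm: "hermitian_mat (A + S)"
    using mat_adjoint_add[OF A S] pA pS A S unfolding psd_mat_def hermitian_mat_def by simp
  have form: "((A + S) *\<^sub>v v) \<bullet>c v = (A *\<^sub>v v) \<bullet>c v + (S *\<^sub>v v) \<bullet>c v"
    if "v \<in> carrier_vec n" for v
    using that A S by (simp add: add_mult_distrib_mat_vec[OF A S] add_scalar_prod_distrib[of _ n])
  have nonneg: "Re ((A *\<^sub>v v) \<bullet>c v) \<ge> 0" "Re ((S *\<^sub>v v) \<bullet>c v) \<ge> 0" if "v \<in> carrier_vec n" for v
    using pA pS that A S unfolding psd_mat_def by auto
  have "0 < Re (((A + S) *\<^sub>v v) \<bullet>c v) \<longleftrightarrow> v \<notin> mat_kernel A \<inter> mat_kernel S"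
    if v: "v \<in> carrier_vec n" for v
  proof
    assume "0 < Re (((A + S) *\<^sub>v v) \<bullet>c v)"
    thus "v \<notin> mat_kernel A \<inter> mat_kernel S"
      using form[OF v] unfolding mat_kernel[OF A] mat_kernel[OF S] by auto
  next
    assume "v \<notin> mat_kernel A \<inter> mat_kernel S"
    hence "A *\<^sub>v v \<noteq> 0\<^sub>v n \<or> S *\<^sub>v v \<noteq> 0\<^sub>v n" using v unfolding mat_kernel[OF A] mat_kernel[OF S] by auto
    hence "Re ((A *\<^sub>v v) \<bullet>c v) \<noteq> 0 \<or> Re ((S *\<^sub>v v) \<bullet>c v) \<noteq> 0"
      using psd_mat_form_zero[OF pA A v] psd_mat_form_zero[OF pS S v] by blast
    thus "0 < Re (((A + S) *\<^sub>v v) \<bullet>c v)" using form[OF v] nonneg[OF v] by auto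
  qed
  moreover have "0\<^sub>v n \<in> mat_kernel A \<inter> mat_kernel S"
    unfolding mat_kernel[OF A] mat_kernel[OF S] using A S by auto
  moreover have "mat_kernel A \<subseteq> carrier_vec n" by (rule mat_kernel_carrier[OF A])
  moreover have "dim_row (A + S) = n" using S by simp
  ultimately show ?thesis unfolding pd_mat_def using herm by blast
qed

section \<open>The block matrix\<close>

lemma invertible_mat_iff_mat_kernel:
  assumes H: "(H :: 'a :: field mat) \<in> carrier_mat n n"
  shows "invertible_mat H \<longleftrightarrow> mat_kernel H = {0\<^sub>v n}"
proof
  assume "invertible_mat H"
  then obtain X where HX: "H * X = 1\<^sub>m n" and XH: "X * H = 1\<^sub>m (dim_row X)"
    unfolding invertible_mat_def inverts_mat_def using H by auto
  have X: "X \<in> carrier_mat n n"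
    using arg_cong[OF HX, of dim_col] arg_cong[OF XH, of dim_col] H by auto
  have "v = 0\<^sub>v n" if v: "v \<in> carrier_vec n" and Hv: "H *\<^sub>v v = 0\<^sub>v n" for v
  proof -
    have "v = (X * H) *\<^sub>v v" using XH X v by simp
    also have "\<dots> = X *\<^sub>v (H *\<^sub>v v)" by (rule assoc_mult_mat_vec[OF X H v])
    finally show ?thesis using Hv X by auto
  qed
  thus "mat_kernel H = {0\<^sub>v n}" unfolding mat_kernel[OF H] using H by auto
next
  assume "mat_kernel H = {0\<^sub>v n}"
  hence "det H \<noteq> 0" unfolding det_0_iff_vec_prod_zero_field[OF H] mat_kernel[OF H] by blast
  from det_non_zero_imp_unit[OF H this, of undefined]
  obtain X where "X \<in> carrier_mat n n" "X * H = 1\<^sub>m n" "H * X = 1\<^sub>m n"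
    unfolding Units_def ring_mat_simps by auto
  thus "invertible_mat H" unfolding invertible_mat_def inverts_mat_def using H by auto
qed

lemma append_vec_eq_zero_iff:
  assumes "(a :: 'a :: zero vec) \<in> carrier_vec p" "b \<in> carrier_vec q"
  shows "a @\<^sub>v b = 0\<^sub>v (p + q) \<longleftrightarrow> a = 0\<^sub>v p \<and> b = 0\<^sub>v q"
proof -
  have "0\<^sub>v (p + q) = (0\<^sub>v p @\<^sub>v 0\<^sub>v q :: 'a vec)" by (rule eq_vecI) auto
  thus ?thesis using append_vec_eq[OF assms(1) zero_carrier_vec] by simp
qed

lemma minus_vec_eq_zero_iff:
  assumes "(a :: 'a :: ab_group_add vec) \<in> carrier_vec n" "b \<in> carrier_vec n"
  shows "a - b = 0\<^sub>v n \<longleftrightarrow> a = b"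
proof
  assume "a - b = 0\<^sub>v n"
  hence "(a - b) $ i = 0" if "i < n" for i using that by simp
  thus "a = b" using assms by (intro eq_vecI) auto
qed (use assms in simp)

lemma four_block_mult_append_eq_0_iff:
  assumes A: "A \<in> carrier_mat p p" and B: "B \<in> carrier_mat p q" and C: "C \<in> carrier_mat q q"
    and pA: "psd_mat A" and pC: "psd_mat C"
    and x: "x \<in> carrier_vec p" and y: "y \<in> carrier_vec q"
  shows "four_block_mat A B (mat_adjoint B) (- C) *\<^sub>v (x @\<^sub>v y) = 0\<^sub>v (p + q) \<longleftrightarrow>
    A *\<^sub>v x = 0\<^sub>v p \<and> mat_adjoint B *\<^sub>v x = 0\<^sub>v q \<and> C *\<^sub>v y = 0\<^sub>v q \<and> B *\<^sub>v y = 0\<^sub>v p"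
proof -
  have aB: "mat_adjoint B \<in> carrier_mat q p" using B by simp
  have Ax: "A *\<^sub>v x \<in> carrier_vec p" and By: "B *\<^sub>v y \<in> carrier_vec p"
    and Bx: "mat_adjoint B *\<^sub>v x \<in> carrier_vec q" and Cy: "C *\<^sub>v y \<in> carrier_vec q"
    using mult_mat_vec_carrier[OF A x] mult_mat_vec_carrier[OF B y]
      mult_mat_vec_carrier[OF aB x] mult_mat_vec_carrier[OF C y] by auto
  have "four_block_mat A B (mat_adjoint B) (- C) *\<^sub>v (x @\<^sub>v y)
      = (A *\<^sub>v x + B *\<^sub>v y) @\<^sub>v (mat_adjoint B *\<^sub>v x - C *\<^sub>v y)"
    using four_block_mat_mult_vec[OF A B aB uminus_carrier_mat[OF C] x y] C y
    by (simp add: minus_add_uminus_vec[OF Bx Cy])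
  also have "\<dots> = 0\<^sub>v (p + q) \<longleftrightarrow> A *\<^sub>v x + B *\<^sub>v y = 0\<^sub>v p \<and> mat_adjoint B *\<^sub>v x - C *\<^sub>v y = 0\<^sub>v q"
    using Ax By Bx Cy by (intro append_vec_eq_zero_iff) auto
  also have "\<dots> \<longleftrightarrow> A *\<^sub>v x = 0\<^sub>v p \<and> mat_adjoint B *\<^sub>v x = 0\<^sub>v q \<and> C *\<^sub>v y = 0\<^sub>v q \<and> B *\<^sub>v y = 0\<^sub>v p"
  proof
    assume eq: "A *\<^sub>v x + B *\<^sub>v y = 0\<^sub>v p \<and> mat_adjoint B *\<^sub>v x - C *\<^sub>v y = 0\<^sub>v q"
    have "(A *\<^sub>v x) \<bullet>c x + y \<bullet>c (mat_adjoint B *\<^sub>v x) = 0"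
      using arg_cong[OF conjunct1[OF eq], of "\<lambda>z. z \<bullet>c x"] Ax By x
      by (simp add: add_scalar_prod_distrib[of _ p] cscalar_prod_mat_adjoint[OF B y x])
    moreover have "mat_adjoint B *\<^sub>v x = C *\<^sub>v y"
      using eq minus_vec_eq_zero_iff[OF Bx Cy] by simp
    ultimately have "(A *\<^sub>v x) \<bullet>c x + cnj ((C *\<^sub>v y) \<bullet>c y) = 0"
      using cnj_cscalar_prod[OF Cy y] by simp
    hence "Re ((A *\<^sub>v x) \<bullet>c x + cnj ((C *\<^sub>v y) \<bullet>c y)) = 0" by (simp only: zero_complex.sel)
    hence "Re ((A *\<^sub>v x) \<bullet>c x) + Re ((C *\<^sub>v y) \<bullet>c y) = 0" by simp
    moreover have "Re ((A *\<^sub>v x) \<bullet>c x) \<ge> 0" "Re ((C *\<^sub>v y) \<bullet>c y) \<ge> 0"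
      using pA pC A C x y unfolding psd_mat_def by auto
    ultimately have "A *\<^sub>v x = 0\<^sub>v p" "C *\<^sub>v y = 0\<^sub>v q"
      using psd_mat_form_zero[OF pA A x] psd_mat_form_zero[OF pC C y] by auto
    thus "A *\<^sub>v x = 0\<^sub>v p \<and> mat_adjoint B *\<^sub>v x = 0\<^sub>v q \<and> C *\<^sub>v y = 0\<^sub>v q \<and> B *\<^sub>v y = 0\<^sub>v p"
      using eq Bx By by auto
  qed (use A B aB C x y in auto)
  finally show ?thesis .
qed

lemma mat_kernel_four_block:
  assumes A: "A \<in> carrier_mat p p" and B: "B \<in> carrier_mat p q" and C: "C \<in> carrier_mat q q"
    and pA: "psd_mat A" and pC: "psd_mat C"
  shows "mat_kernel (four_block_mat A B (mat_adjoint B) (- C)) = {x @\<^sub>v y | x y.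
    x \<in> mat_kernel A \<inter> mat_kernel (mat_adjoint B) \<and> y \<in> mat_kernel C \<inter> mat_kernel B}"
    (is "mat_kernel ?H = {x @\<^sub>v y | x y. x \<in> ?K1 \<and> y \<in> ?K2}")
proof -
  have aB: "mat_adjoint B \<in> carrier_mat q p" using B by simp
  have H: "?H \<in> carrier_mat (p + q) (p + q)"
    by (rule four_block_carrier_mat[OF A uminus_carrier_mat[OF C]])
  have ker: "x @\<^sub>v y \<in> mat_kernel ?H \<longleftrightarrow> x \<in> ?K1 \<and> y \<in> ?K2"
    if "x \<in> carrier_vec p" "y \<in> carrier_vec q" for x y
    unfolding mat_kernel[OF H] mat_kernel[OF A] mat_kernel[OF aB] mat_kernel[OF C] mat_kernel[OF B]
    using four_block_mult_append_eq_0_iff[OF A B C pA pC that] that by auto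
  show ?thesis
  proof (intro equalityI subsetI)
    fix v assume v: "v \<in> mat_kernel ?H"
    have vc: "v \<in> carrier_vec (p + q)" using mat_kernel_carrier[OF H] v by blast
    have "vec_first v p @\<^sub>v vec_last v q \<in> mat_kernel ?H"
      using v vec_first_last_append[OF vc] by simp
    hence "vec_first v p \<in> ?K1" "vec_last v q \<in> ?K2"
      using ker[OF vec_first_carrier vec_last_carrier] by auto
    thus "v \<in> {x @\<^sub>v y | x y. x \<in> ?K1 \<and> y \<in> ?K2}"
      using vec_first_last_append[OF vc] by (metis (mono_tags, lifting) mem_Collect_eq)
  next
    fix v assume "v \<in> {x @\<^sub>v y | x y. x \<in> ?K1 \<and> y \<in> ?K2}"
    then obtain x y where v: "v = x @\<^sub>v y" and xy: "x \<in> ?K1" "y \<in> ?K2" by blast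
    have "x \<in> carrier_vec p" "y \<in> carrier_vec q"
      using xy mat_kernel_carrier[OF A] mat_kernel_carrier[OF C] by auto
    thus "v \<in> mat_kernel ?H" unfolding v using ker xy by blast
  qed
qed

lemma append_vec_sets_eq_zero_iff:
  assumes K1: "K1 \<subseteq> carrier_vec p" "0\<^sub>v p \<in> K1" and K2: "K2 \<subseteq> carrier_vec q" "0\<^sub>v q \<in> K2"
  shows "{x @\<^sub>v y | x y. x \<in> K1 \<and> y \<in> K2} = {0\<^sub>v (p + q) :: 'a :: zero vec} \<longleftrightarrow>
    K1 = {0\<^sub>v p} \<and> K2 = {0\<^sub>v q}"
proof
  assume eq: "{x @\<^sub>v y | x y. x \<in> K1 \<and> y \<in> K2} = {0\<^sub>v (p + q) :: 'a vec}"
  have "x = 0\<^sub>v p" if "x \<in> K1" for x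
  proof -
    have "x @\<^sub>v 0\<^sub>v q \<in> {x @\<^sub>v y | x y. x \<in> K1 \<and> y \<in> K2}" using that K2 by blast
    thus ?thesis using append_vec_eq_zero_iff[of x p "0\<^sub>v q" q] that K1 eq by auto
  qed
  moreover have "y = 0\<^sub>v q" if "y \<in> K2" for y
  proof -
    have "0\<^sub>v p @\<^sub>v y \<in> {x @\<^sub>v y | x y. x \<in> K1 \<and> y \<in> K2}" using that K1 by blast
    thus ?thesis using append_vec_eq_zero_iff[of "0\<^sub>v p" p y q] that K2 eq by auto
  qed
  ultimately show "K1 = {0\<^sub>v p} \<and> K2 = {0\<^sub>v q}" using K1 K2 by blast
next
  assume "K1 = {0\<^sub>v p} \<and> K2 = {0\<^sub>v q}"
  moreover have "0\<^sub>v p @\<^sub>v 0\<^sub>v q = (0\<^sub>v (p + q) :: 'a vec)"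
    using append_vec_eq_zero_iff[of "0\<^sub>v p" p "0\<^sub>v q" q] by simp
  ultimately show "{x @\<^sub>v y | x y. x \<in> K1 \<and> y \<in> K2} = {0\<^sub>v (p + q) :: 'a vec}" by auto
qed

lemma mat_kernel_four_block_trivial_iff:
  assumes A: "A \<in> carrier_mat p p" and B: "B \<in> carrier_mat p q" and C: "C \<in> carrier_mat q q"
    and pA: "psd_mat A" and pC: "psd_mat C"
  shows "mat_kernel (four_block_mat A B (mat_adjoint B) (- C)) = {0\<^sub>v (p + q)} \<longleftrightarrow>
    mat_kernel A \<inter> mat_kernel (mat_adjoint B) = {0\<^sub>v p} \<and> mat_kernel C \<inter> mat_kernel B = {0\<^sub>v q}"
proof -
  have aB: "mat_adjoint B \<in> carrier_mat q p" using B by simp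
  have "mat_kernel A \<inter> mat_kernel (mat_adjoint B) \<subseteq> carrier_vec p"
    "mat_kernel C \<inter> mat_kernel B \<subseteq> carrier_vec q"
    using mat_kernel_carrier[OF A] mat_kernel_carrier[OF C] by auto
  moreover have "0\<^sub>v p \<in> mat_kernel A \<inter> mat_kernel (mat_adjoint B)"
    "0\<^sub>v q \<in> mat_kernel C \<inter> mat_kernel B"
    unfolding mat_kernel[OF A] mat_kernel[OF aB] mat_kernel[OF C] mat_kernel[OF B] using A aB C B by auto
  ultimately show ?thesis
    unfolding mat_kernel_four_block[OF assms] by (intro append_vec_sets_eq_zero_iff)
qed

theorem corollary2p2:
  fixes A B C :: "complex mat" and p q :: nat
  assumes "A \<in> carrier_mat p p" and "B \<in> carrier_mat p q" and "C \<in> carrier_mat q q"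
    and "psd_mat A" and "psd_mat C"
  shows "invertible_mat (four_block_mat A B (mat_adjoint B) (- C)) \<longleftrightarrow>
         pd_mat (A + sqrt_mat (B * mat_adjoint B)) \<and> pd_mat (C + sqrt_mat (mat_adjoint B * B))"
proof -
  note A = assms(1) and B = assms(2) and C = assms(3) and pA = assms(4) and pC = assms(5)
  have aB: "mat_adjoint B \<in> carrier_mat q p" using B by simp
  have H: "four_block_mat A B (mat_adjoint B) (- C) \<in> carrier_mat (p + q) (p + q)"
    by (rule four_block_carrier_mat[OF A uminus_carrier_mat[OF C]])
  have X1: "B * mat_adjoint B \<in> carrier_mat p p" "psd_mat (B * mat_adjoint B)"
    using mult_carrier_mat[OF B aB] psd_mat_adjoint_mult_self[OF aB] by auto
  have X2: "mat_adjoint B * B \<in> carrier_mat q q" "psd_mat (mat_adjoint B * B)"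
    using mult_carrier_mat[OF aB B] psd_mat_adjoint_mult_self[OF B] by auto
  have "mat_kernel (sqrt_mat (B * mat_adjoint B)) = mat_kernel (mat_adjoint B)"
    using mat_kernel_sqrt_mat[OF X1(2,1)] mat_kernel_adjoint_mult_self[OF aB] by simp
  moreover have "mat_kernel (sqrt_mat (mat_adjoint B * B)) = mat_kernel B"
    using mat_kernel_sqrt_mat[OF X2(2,1)] mat_kernel_adjoint_mult_self[OF B] by simp
  ultimately show ?thesis
    unfolding invertible_mat_iff_mat_kernel[OF H] mat_kernel_four_block_trivial_iff[OF A B C pA pC]
      pd_mat_add_iff_mat_kernel[OF pA psd_sqrt_mat[OF X1(2,1)] A sqrt_mat_carrier[OF X1(2,1)]]
      pd_mat_add_iff_mat_kernel[OF pC psd_sqrt_mat[OF X2(2,1)] C sqrt_mat_carrier[OF X2(2,1)]]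
    by simp
qed

end
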